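(* For all integers $n\ge 2$ and $1\le k<n$, the domination number of $H_B(n,k)$ is $\gamma(H_B(n,k))=\binom{n}{k}$.
   Context: Fix integers $n\ge 2$ and $1\le k<n$ and positive real numbers $x_1<x_2<\dots<x_n$. Let $\mathscr{B}_n=\{\pm x_1,\pm x_2,\dots,\pm x_{n-1},x_n\}$ (so $-x_n\notin\mathscr{B}_n$). Let $\phi(\mathscr{B}_n)$ be the family of all nonempty subsets $S\subseteq\mathscr{B}_n$ whose elements have pairwise distinct absolute values and whose element of largest absolute value is positive. Let $\mathscr{B}_n^+=\{x_1,\dots,x_n\}$, let $V_1$ be the set of all $k$-element subsets of $\mathscr{B}_n^+$, and let $V_2=\phi(\mathscr{B}_n)\setminus V_1$. For $A\in\phi(\mathscr{B}_n)$ put $A^\dagger=\{|a|:a\in A\}$. The bipartite Kneser B type-$k$ graph $H_B(n,k)$ is the simple graph with vertex set $V_1\cup V_2$ in which $X\in V_1$ and $Y\in V_2$ are adjacent if and only if $X\subseteq Y^\dagger$ or $Y^\dagger\subseteq X$, and there are no other edges. A dominating set is a set $S$ of vertices such that every vertex not in $S$ is adjacent to some vertex of $S$; the domination number is the minimum size of a dominating set. *)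

theory Defs
  imports Complex_Main
begin

definition dominating_set :: "'a set \<Rightarrow> ('a \<Rightarrow> 'a \<Rightarrow> bool) \<Rightarrow> 'a set \<Rightarrow> bool" where
  "dominating_set V E S \<longleftrightarrow> S \<subseteq> V \<and> (\<forall>v \<in> V - S. \<exists>u \<in> S. E v u)"

definition domination_number :: "'a set \<Rightarrow> ('a \<Rightarrow> 'a \<Rightarrow> bool) \<Rightarrow> nat" where
  "domination_number V E = (LEAST m. \<exists>S. dominating_set V E S \<and> finite S \<and> card S = m)"

definition Bset :: "(nat \<Rightarrow> real) \<Rightarrow> nat \<Rightarrow> real set" where
  "Bset x n = {x i | i. 1 \<le> i \<and> i \<le> n} \<union> {- x i | i. 1 \<le> i \<and> i \<le> n - 1}"

definition Bplus :: "(nat \<Rightarrow> real) \<Rightarrow> nat \<Rightarrow> real set" where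
  "Bplus x n = {x i | i. 1 \<le> i \<and> i \<le> n}"

definition phiB :: "(nat \<Rightarrow> real) \<Rightarrow> nat \<Rightarrow> real set set" where
  "phiB x n = {S. S \<subseteq> Bset x n \<and> S \<noteq> {} \<and> inj_on abs S \<and>
                  (\<exists>a \<in> S. 0 < a \<and> (\<forall>b \<in> S. \<bar>b\<bar> \<le> \<bar>a\<bar>))}"

definition dagger :: "real set \<Rightarrow> real set" where
  "dagger A = abs ` A"

definition HB_V1 :: "(nat \<Rightarrow> real) \<Rightarrow> nat \<Rightarrow> nat \<Rightarrow> real set set" where
  "HB_V1 x n k = {X. X \<subseteq> Bplus x n \<and> card X = k}"

definition HB_V2 :: "(nat \<Rightarrow> real) \<Rightarrow> nat \<Rightarrow> nat \<Rightarrow> real set set" where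
  "HB_V2 x n k = phiB x n - HB_V1 x n k"

definition HB_vertices :: "(nat \<Rightarrow> real) \<Rightarrow> nat \<Rightarrow> nat \<Rightarrow> real set set" where
  "HB_vertices x n k = HB_V1 x n k \<union> HB_V2 x n k"

definition HB_adj :: "(nat \<Rightarrow> real) \<Rightarrow> nat \<Rightarrow> nat \<Rightarrow> real set \<Rightarrow> real set \<Rightarrow> bool" where
  "HB_adj x n k A B \<longleftrightarrow>
     (A \<in> HB_V1 x n k \<and> B \<in> HB_V2 x n k \<and> (A \<subseteq> dagger B \<or> dagger B \<subseteq> A)) \<or>
     (B \<in> HB_V1 x n k \<and> A \<in> HB_V2 x n k \<and> (B \<subseteq> dagger A \<or> dagger A \<subseteq> B))"

end

theory Submission imports Defs begin

text \<open>The k-subsets V1 of B_n^+ dominate: the dagger of any vertex is a subset of B_n^+, hence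
  comparable with some k-subset. Conversely, a dominating set S must pay for every X in V1.
  For k \<ge> 2, negating the least element of X gives a vertex of V2 whose only neighbour is X,
  so S meets each of the pairwise disjoint pairs {X, negate_min X}. For k = 1 that vertex {-x_i}
  is not in phi(B_n). Instead let m be the largest index with {x_m} not in S: for every other
  such index i the vertex {-x_i, x_m} has only the neighbours {x_i} and {x_m}, so it lies in S;
  and {x_m} is paid for by {x_i0, x_m} for another missing index i0, or by any of its
  neighbours if it is the only singleton missing.\<close>

lemma domination_number_eqI:
  assumes "dominating_set V E S\<^sub>0" "finite S\<^sub>0" "card S\<^sub>0 = m"
    and "\<And>S. dominating_set V E S \<Longrightarrow> finite S \<Longrightarrow> m \<le> card S"
  shows "domination_number V E = m"
  unfolding domination_number_def using assms by (intro Least_equality) blast+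

lemma dominating_set_mem_if_no_neighbour_in:
  assumes "dominating_set V E S" "v \<in> V" "\<And>u. E v u \<Longrightarrow> u \<notin> S"
  shows "v \<in> S"
  using assms unfolding dominating_set_def by blast

lemma exists_card_subset_comparable:
  assumes "finite A" "D \<subseteq> A" "m \<le> card A"
  obtains U where "U \<subseteq> A" "card U = m" "U \<subseteq> D \<or> D \<subseteq> U"
proof (cases "m \<le> card D")
  case True
  then obtain U where "U \<subseteq> D" "card U = m" by (rule obtain_subset_with_card_n)
  then show ?thesis using assms(2) by (intro that[of U]) auto
next
  case False
  have "finite D" using assms finite_subset by blast
  then have "m - card D \<le> card (A - D)" using assms by (simp add: card_Diff_subset)
  then obtain F where F: "F \<subseteq> A - D" "card F = m - card D" "finite F"
    by (rule obtain_subset_with_card_n)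
  have "card (D \<union> F) = m" using F \<open>finite D\<close> False by (subst card_Un_disjoint) auto
  then show ?thesis using F assms(2) by (intro that[of "D \<union> F"]) auto
qed

context
  fixes n :: nat and x :: "nat \<Rightarrow> real"
  assumes pos: "\<forall>i. 1 \<le> i \<and> i \<le> n \<longrightarrow> 0 < x i"
    and mono: "\<forall>i j. 1 \<le> i \<and> i < j \<and> j \<le> n \<longrightarrow> x i < x j"
begin

lemma x_less_x_iff: "i \<in> {1..n} \<Longrightarrow> j \<in> {1..n} \<Longrightarrow> x i < x j \<longleftrightarrow> i < j"
  using mono by (metis atLeastAtMost_iff less_asym linorder_neqE_nat)

lemma x_eq_x_iff: "i \<in> {1..n} \<Longrightarrow> j \<in> {1..n} \<Longrightarrow> x i = x j \<longleftrightarrow> i = j"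
  using x_less_x_iff by (metis less_irrefl linorder_neqE_nat)

lemma Bplus_eq_image: "Bplus x n = x ` {1..n}"
  unfolding Bplus_def by auto

lemma finite_Bplus: "finite (Bplus x n)"
  by (simp add: Bplus_eq_image)

lemma card_Bplus: "card (Bplus x n) = n"
  using x_eq_x_iff by (simp add: Bplus_eq_image card_image inj_on_def)

lemma Bplus_pos: "b \<in> Bplus x n \<Longrightarrow> 0 < b"
  using pos by (auto simp: Bplus_eq_image)

lemma Bplus_subset_Bset: "Bplus x n \<subseteq> Bset x n"
  unfolding Bset_def Bplus_def by auto

lemma abs_mem_Bplus: "b \<in> Bset x n \<Longrightarrow> \<bar>b\<bar> \<in> Bplus x n"
proof -
  assume "b \<in> Bset x n"
  then have "\<exists>i \<in> {1..n}. b = x i \<or> b = - x i" unfolding Bset_def by fastforce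
  then obtain i where "i \<in> {1..n}" "b = x i \<or> b = - x i" by blast
  then show ?thesis using pos by (auto simp: Bplus_eq_image)
qed

lemma dagger_subset_Bplus: "Y \<subseteq> Bset x n \<Longrightarrow> dagger Y \<subseteq> Bplus x n"
  unfolding dagger_def using abs_mem_Bplus by blast

lemma card_HB_V1: "card (HB_V1 x n k) = n choose k"
  unfolding HB_V1_def using n_subsets[OF finite_Bplus] card_Bplus by simp

lemma finite_HB_V1: "finite (HB_V1 x n k)"
  unfolding HB_V1_def using finite_Bplus by simp

lemma HB_adj_HB_V2_imp:
  assumes "Y \<in> HB_V2 x n k" "HB_adj x n k Y U"
  shows "U \<in> HB_V1 x n k" "U \<subseteq> dagger Y \<or> dagger Y \<subseteq> U"
  using assms unfolding HB_adj_def HB_V2_def by auto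

lemma dominating_set_HB_V1:
  assumes "k \<le> n"
  shows "dominating_set (HB_vertices x n k) (HB_adj x n k) (HB_V1 x n k)"
  unfolding dominating_set_def
proof (intro conjI ballI)
  show "HB_V1 x n k \<subseteq> HB_vertices x n k" by (simp add: HB_vertices_def)
next
  fix Y assume "Y \<in> HB_vertices x n k - HB_V1 x n k"
  then have Y: "Y \<in> HB_V2 x n k" by (auto simp: HB_vertices_def)
  then have "dagger Y \<subseteq> Bplus x n" by (intro dagger_subset_Bplus) (simp add: HB_V2_def phiB_def)
  then obtain U where "U \<subseteq> Bplus x n" "card U = k" "U \<subseteq> dagger Y \<or> dagger Y \<subseteq> U"
    using exists_card_subset_comparable[OF finite_Bplus] card_Bplus assms by metis
  with Y show "\<exists>U \<in> HB_V1 x n k. HB_adj x n k Y U" by (auto simp: HB_V1_def HB_adj_def)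
qed

lemma phiB_memI:
  assumes "Y \<subseteq> Bset x n" "inj_on abs Y" "a \<in> Y" "0 < a" "\<And>b. b \<in> Y \<Longrightarrow> \<bar>b\<bar> \<le> a"
  shows "Y \<in> phiB x n"
  using assms unfolding phiB_def by force

definition negate_min :: "real set \<Rightarrow> real set" where
  "negate_min X = insert (- Min X) (X - {Min X})"

context
  fixes k :: nat and X :: "real set"
  assumes two_le_k: "2 \<le> k" and X: "X \<in> HB_V1 x n k"
begin

lemma dagger_negate_min: "dagger (negate_min X) = X"
proof -
  have XB: "X \<subseteq> Bplus x n" and "finite X" "X \<noteq> {}"
    using X two_le_k finite_Bplus finite_subset by (auto simp: HB_V1_def)
  then have minX: "Min X \<in> X" by simp
  have "abs ` (X - {Min X}) = X - {Min X}"
    using XB by (intro image_cong[where g = id, simplified]) (auto intro: abs_of_pos Bplus_pos)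
  moreover have "\<bar>- Min X\<bar> = Min X" using minX XB Bplus_pos by force
  ultimately show ?thesis
    using minX unfolding negate_min_def dagger_def by (simp add: insert_absorb)
qed

lemma negate_min_in_HB_V2: "negate_min X \<in> HB_V2 x n k"
proof -
  have XB: "X \<subseteq> Bplus x n" and "card X = k" using X by (auto simp: HB_V1_def)
  then have fX: "finite X" and "card X \<ge> 2" using two_le_k finite_Bplus finite_subset by auto
  have posX: "0 < y" if "y \<in> X" for y using that XB Bplus_pos by blast
  have "X \<noteq> {}" using \<open>card X \<ge> 2\<close> by auto
  then have "card (X - {Min X}) \<noteq> 0" using fX \<open>card X \<ge> 2\<close> by (simp add: card_Diff_singleton)
  then have "X - {Min X} \<noteq> {}" by (metis card.empty)
  then obtain y where y: "y \<in> X" "y \<noteq> Min X" by blast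
  have minX: "Min X \<in> X" and maxX: "Max X \<in> X" using fX \<open>X \<noteq> {}\<close> by simp_all
  have max_gt_min: "Min X < Max X"
    using Min_le[OF fX y(1)] Max_ge[OF fX y(1)] y(2) by linarith
  have "Min X \<in> x ` {1..n}" "Max X \<in> x ` {1..n}"
    using minX maxX XB unfolding Bplus_eq_image by blast+
  then obtain i j where i: "i \<in> {1..n}" "Min X = x i" and j: "j \<in> {1..n}" "Max X = x j"
    by blast
  have "i < j" using x_less_x_iff[OF i(1) j(1)] max_gt_min i j by simp
  then have "- Min X \<in> Bset x n" using i j unfolding Bset_def by auto
  then have sub: "negate_min X \<subseteq> Bset x n"
    using XB Bplus_subset_Bset unfolding negate_min_def by auto
  have "- Min X \<notin> X" using posX[of "- Min X"] posX[OF minX] by linarith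
  then have "card (negate_min X) = card X"
    using fX minX \<open>card X \<ge> 2\<close> by (simp add: negate_min_def card_Diff_singleton)
  then have inj: "inj_on abs (negate_min X)"
    using fX dagger_negate_min unfolding dagger_def
    by (intro eq_card_imp_inj_on) (simp_all add: negate_min_def)
  have "\<bar>b\<bar> \<le> Max X" if "b \<in> negate_min X" for b
  proof -
    have "\<bar>b\<bar> \<in> X" using that dagger_negate_min unfolding dagger_def by blast
    then show ?thesis using fX by simp
  qed
  moreover have "Max X \<in> negate_min X"
    using maxX max_gt_min unfolding negate_min_def by auto
  ultimately have "negate_min X \<in> phiB x n"
    using phiB_memI[OF sub inj] posX[OF maxX] by blast
  moreover have "negate_min X \<notin> HB_V1 x n k"
    using Bplus_pos[of "- Min X"] posX[OF minX] unfolding HB_V1_def negate_min_def by auto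
  ultimately show ?thesis by (simp add: HB_V2_def)
qed

lemma HB_adj_negate_min_imp:
  assumes "HB_adj x n k (negate_min X) U"
  shows "U = X"
proof -
  have "U \<in> HB_V1 x n k" "U \<subseteq> X \<or> X \<subseteq> U"
    using HB_adj_HB_V2_imp[OF negate_min_in_HB_V2 assms] by (simp_all add: dagger_negate_min)
  moreover have "finite U" "finite X"
    using calculation(1) X finite_Bplus finite_subset by (auto simp: HB_V1_def)
  moreover have "card U = card X" using calculation(1) X by (simp add: HB_V1_def)
  ultimately show ?thesis by (metis card_subset_eq)
qed

end

lemma choose_le_card_if_dominating:
  assumes two_le_k: "2 \<le> k"
    and dom: "dominating_set (HB_vertices x n k) (HB_adj x n k) S" and "finite S"
  shows "n choose k \<le> card S"
proof -
  define f where "f X = (if X \<in> S then X else negate_min X)" for X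
  have "f X \<in> S" if X: "X \<in> HB_V1 x n k" for X
  proof (cases "X \<in> S")
    case False
    have "negate_min X \<in> S"
      using HB_adj_negate_min_imp[OF two_le_k X] False negate_min_in_HB_V2[OF two_le_k X]
      by (intro dominating_set_mem_if_no_neighbour_in[OF dom]) (auto simp: HB_vertices_def)
    with False show ?thesis by (simp add: f_def)
  qed (simp add: f_def)
  moreover have "inj_on f (HB_V1 x n k)"
  proof (rule inj_on_inverseI)
    fix X assume X: "X \<in> HB_V1 x n k"
    show "(if f X \<in> HB_V1 x n k then f X else dagger (f X)) = X"
      using negate_min_in_HB_V2[OF two_le_k X] dagger_negate_min[OF two_le_k X] X
      by (auto simp: f_def HB_V2_def)
  qed
  ultimately show ?thesis
    using card_inj_on_le[of f "HB_V1 x n k" S] \<open>finite S\<close> card_HB_V1 by (simp add: image_subset_iff)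
qed

lemma HB_V1_one_eq: "HB_V1 x n 1 = (\<lambda>i. {x i}) ` {1..n}"
proof (intro equalityI subsetI)
  fix X assume "X \<in> HB_V1 x n 1"
  then obtain a where "X = {a}" "a \<in> Bplus x n" by (auto simp: HB_V1_def card_1_singleton_iff)
  then show "X \<in> (\<lambda>i. {x i}) ` {1..n}" by (auto simp: Bplus_eq_image)
qed (auto simp: HB_V1_def Bplus_eq_image)

context
  fixes i j :: nat and s :: real
  assumes i: "i \<in> {1..n}" and j: "j \<in> {1..n}" and "i < j" and s: "s = 1 \<or> s = -1"
begin

lemma abs_sign_x: "\<bar>s * x i\<bar> = x i"
  using s pos i by auto

lemma dagger_pair: "dagger {s * x i, x j} = {x i, x j}"
proof -
  have "0 < x j" using pos j by simp
  then show ?thesis by (simp add: dagger_def abs_sign_x)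
qed

lemma pair_in_HB_V2: "{s * x i, x j} \<in> HB_V2 x n 1"
proof -
  have "0 < x i" "x i < x j" using pos i j x_less_x_iff[OF i j] \<open>i < j\<close> by auto
  then have ne: "s * x i \<noteq> x j" using abs_sign_x by auto
  have "i \<le> n - 1" using \<open>i < j\<close> j by auto
  then have "x i \<in> Bset x n" "- x i \<in> Bset x n" using i unfolding Bset_def by auto
  then have "s * x i \<in> Bset x n" using s by auto
  then have "{s * x i, x j} \<subseteq> Bset x n" using j unfolding Bset_def by auto
  moreover have "inj_on abs {s * x i, x j}"
    using \<open>x i < x j\<close> abs_sign_x ne \<open>0 < x i\<close> by (simp add: inj_on_def)
  moreover have "\<bar>b\<bar> \<le> x j" if "b \<in> {s * x i, x j}" for b
    using that \<open>0 < x i\<close> \<open>x i < x j\<close> abs_sign_x by auto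
  ultimately have "{s * x i, x j} \<in> phiB x n"
    using \<open>0 < x i\<close> \<open>x i < x j\<close> by (intro phiB_memI[where a = "x j"]) auto
  moreover have "card {s * x i, x j} = 2" using ne by simp
  ultimately show ?thesis by (simp add: HB_V2_def HB_V1_def)
qed

lemma HB_adj_pair_imp:
  assumes "HB_adj x n 1 {s * x i, x j} U"
  shows "U = {x i} \<or> U = {x j}"
proof -
  from HB_adj_HB_V2_imp[OF pair_in_HB_V2 assms]
  have "U \<in> HB_V1 x n 1" and "U \<subseteq> {x i, x j} \<or> {x i, x j} \<subseteq> U"
    by (simp_all add: dagger_pair)
  moreover from this(1) obtain l where "U = {x l}" unfolding HB_V1_one_eq by blast
  ultimately show ?thesis by (auto split: if_splits)
qed

end

context
  fixes S :: "real set set"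
  assumes dom: "dominating_set (HB_vertices x n 1) (HB_adj x n 1) S"
begin

lemma pair_in_dominating_one:
  assumes "i \<in> {1..n}" "j \<in> {1..n}" "i < j" "s = 1 \<or> s = -1" "{x i} \<notin> S" "{x j} \<notin> S"
  shows "{s * x i, x j} \<in> S"
  using assms pair_in_HB_V2[of i j s] HB_adj_pair_imp[of i j s]
  by (intro dominating_set_mem_if_no_neighbour_in[OF dom]) (auto simp: HB_vertices_def)

lemma inj_into_dominating_one_if_unique_missing:
  assumes m: "m \<in> {1..n}" "{x m} \<notin> S" and others: "\<And>i. i \<in> {1..n} \<Longrightarrow> i \<noteq> m \<Longrightarrow> {x i} \<in> S"
  shows "\<exists>w. inj_on w {1..n} \<and> w ` {1..n} \<subseteq> S"
proof -
  have "{x m} \<in> HB_V1 x n 1" using m(1) unfolding HB_V1_one_eq by blast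
  moreover from this have "{x m} \<in> HB_vertices x n 1 - S" using m(2) by (simp add: HB_vertices_def)
  then obtain u where "u \<in> S" "HB_adj x n 1 {x m} u"
    using dom unfolding dominating_set_def by blast
  ultimately have "u \<in> HB_V2 x n 1" unfolding HB_adj_def HB_V2_def by blast
  then have "u \<notin> (\<lambda>i. {x i}) ` {1..n}" unfolding HB_V2_def HB_V1_one_eq by blast
  then have "inj_on ((\<lambda>i. {x i})(m := u)) {1..n}"
    using x_eq_x_iff by (intro inj_on_fun_updI) (auto simp: inj_on_def)
  moreover have "((\<lambda>i. {x i})(m := u)) ` {1..n} \<subseteq> S"
    using \<open>u \<in> S\<close> others by auto
  ultimately show ?thesis by blast
qed

lemma inj_into_dominating_one_if_two_missing:
  assumes i0: "i0 \<in> {1..n}" "{x i0} \<notin> S" and m: "m \<in> {1..n}" "{x m} \<notin> S" and "i0 < m"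
    and below_m: "\<And>i. i \<in> {1..n} \<Longrightarrow> {x i} \<notin> S \<Longrightarrow> i \<le> m"
  shows "\<exists>w. inj_on w {1..n} \<and> w ` {1..n} \<subseteq> S"
proof -
  define w where "w i = (if {x i} \<in> S then {x i} else {- x i, x m})" for i
  have pos_x: "0 < x i" if "i \<in> {1..n}" for i using pos that by simp
  have "inj_on w {1..n}"
  proof (rule inj_onI)
    fix i j assume i: "i \<in> {1..n}" and j: "j \<in> {1..n}" and "w i = w j"
    then have "x i = x j"
      using pos_x[OF i] pos_x[OF j] pos_x[OF m(1)]
      by (auto simp: w_def doubleton_eq_iff split: if_splits)
    then show "i = j" using x_eq_x_iff i j by blast
  qed
  moreover have "{x i0, x m} \<notin> w ` {1..n}"
  proof
    assume "{x i0, x m} \<in> w ` {1..n}"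
    then obtain j where j: "j \<in> {1..n}" "{x i0, x m} = w j" by blast
    have "x i0 \<noteq> x m" using x_eq_x_iff[OF i0(1) m(1)] \<open>i0 < m\<close> by simp
    then show False
      using j pos_x[OF j(1)] pos_x[OF m(1)] pos_x[OF i0(1)]
      by (auto simp: w_def doubleton_eq_iff split: if_splits)
  qed
  ultimately have "inj_on (w(m := {x i0, x m})) {1..n}" by (rule inj_on_fun_updI)
  moreover have "(w(m := {x i0, x m})) ` {1..n} \<subseteq> S"
  proof (rule image_subsetI)
    fix i assume i: "i \<in> {1..n}"
    consider "i = m" | "i \<noteq> m" "{x i} \<notin> S" | "{x i} \<in> S" by blast
    then show "(w(m := {x i0, x m})) i \<in> S"
    proof cases
      case 1
      then show ?thesis using pair_in_dominating_one[OF i0(1) m(1) \<open>i0 < m\<close> _ i0(2) m(2), of 1] by simp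
    next
      case 2
      then have "i < m" using below_m[OF i] by simp
      then show ?thesis
        using 2 pair_in_dominating_one[OF i m(1) _ _ _ m(2), of "-1"] by (simp add: w_def)
    next
      case 3
      then show ?thesis using m(2) by (auto simp: w_def)
    qed
  qed
  ultimately show ?thesis by blast
qed

lemma n_le_card_if_dominating_one:
  assumes "finite S"
  shows "n \<le> card S"
proof -
  define C where "C = {i \<in> {1..n}. {x i} \<notin> S}"
  have "finite C" by (simp add: C_def)
  have "\<exists>w. inj_on w {1..n} \<and> w ` {1..n} \<subseteq> S"
  proof (cases "C = {}")
    case True
    then have "(\<lambda>i. {x i}) ` {1..n} \<subseteq> S" by (auto simp: C_def)
    moreover have "inj_on (\<lambda>i. {x i}) {1..n}" using x_eq_x_iff by (simp add: inj_on_def)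
    ultimately show ?thesis by blast
  next
    case False
    define m where "m = Max C"
    have "m \<in> C" and below_m: "\<And>i. i \<in> C \<Longrightarrow> i \<le> m"
      using \<open>finite C\<close> False by (simp_all add: m_def)
    then have m: "m \<in> {1..n}" "{x m} \<notin> S" by (simp_all add: C_def)
    show ?thesis
    proof (cases "C = {m}")
      case True
      then have "{x i} \<in> S" if "i \<in> {1..n}" "i \<noteq> m" for i
        using that by (auto simp: C_def)
      then show ?thesis using inj_into_dominating_one_if_unique_missing[OF m] by blast
    next
      case False
      then obtain i0 where "i0 \<in> C" "i0 \<noteq> m" using \<open>m \<in> C\<close> by blast
      then have "i0 < m" using below_m by fastforce
      moreover have "i0 \<in> {1..n}" "{x i0} \<notin> S" using \<open>i0 \<in> C\<close> by (simp_all add: C_def)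
      moreover have "i \<le> m" if "i \<in> {1..n}" "{x i} \<notin> S" for i
        using that below_m by (simp add: C_def)
      ultimately show ?thesis using inj_into_dominating_one_if_two_missing m by blast
    qed
  qed
  then obtain w where "inj_on w {1..n}" "w ` {1..n} \<subseteq> S" by blast
  then have "card {1..n} \<le> card S" using card_inj_on_le \<open>finite S\<close> by blast
  then show ?thesis by simp
qed

end

end

theorem mainTheorem4:
  fixes n k :: nat and x :: "nat \<Rightarrow> real"
  assumes "2 \<le> n" and "1 \<le> k" and "k < n"
    and "\<forall>i. 1 \<le> i \<and> i \<le> n \<longrightarrow> 0 < x i"
    and "\<forall>i j. 1 \<le> i \<and> i < j \<and> j \<le> n \<longrightarrow> x i < x j"
  shows "domination_number (HB_vertices x n k) (HB_adj x n k) = n choose k"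
proof (rule domination_number_eqI)
  show "dominating_set (HB_vertices x n k) (HB_adj x n k) (HB_V1 x n k)"
    using dominating_set_HB_V1[OF assms(4,5)] \<open>k < n\<close> by simp
  show "finite (HB_V1 x n k)" by (rule finite_HB_V1[OF assms(4,5)])
  show "card (HB_V1 x n k) = n choose k" by (rule card_HB_V1[OF assms(4,5)])
next
  fix S assume S: "dominating_set (HB_vertices x n k) (HB_adj x n k) S" "finite S"
  show "n choose k \<le> card S"
  proof (cases "k = 1")
    case True
    then show ?thesis using n_le_card_if_dominating_one[OF assms(4,5)] S by simp
  next
    case False
    then show ?thesis using choose_le_card_if_dominating[OF assms(4,5) _ S] \<open>1 \<le> k\<close> by simp
  qed
qed

end
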